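(* Let $\alpha\in\mathbb C$ and $n\ge 1$ be an integer. The matrix $K_n:=A_\alpha^n-T\big((z+z^{-1})^n\big)$ is a (semi-infinite) Hankel matrix, i.e. its $(i,j)$ entry depends only on $i+j$. Moreover, its first column $k_n:=K_ne_1$ satisfies $$k_{n+1}=A_\alpha k_n+\sigma_n e_1,\qquad n\ge 1,$$ where $\sigma_n=\alpha\binom{n}{n/2}$ if $n$ is even and $\sigma_n=-\binom{n}{\lfloor n/2\rfloor}$ if $n$ is odd.
   Context: All matrices are semi-infinite, with rows and columns indexed by the positive integers, and $e_1$ denotes the first column of the semi-infinite identity matrix $I$. For a Laurent polynomial (or Laurent series with absolutely summable coefficients) $a(z)=\sum_{i\in\mathbb Z}a_iz^i$, $T(a)$ denotes the semi-infinite Toeplitz matrix with $(i,j)$ entry $a_{j-i}$. For $\alpha\in\mathbb C$, $A_\alpha:=T(z+z^{-1})+\alpha e_1e_1^T$, i.e. the semi-infinite tridiagonal matrix with ones on the sub- and superdiagonal, $(1,1)$ entry equal to $\alpha$, and zeros elsewhere. *)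

theory Defs
  imports "HOL-Analysis.Analysis" "HOL-Computational_Algebra.Formal_Laurent_Series"
begin

text \<open>We use functions on nat; only indices \<open>\<ge> 1\<close> are meaningful
  (the value at index 0 is ignored by every operation below).\<close>

type_synonym smat = "nat \<Rightarrow> nat \<Rightarrow> complex"
type_synonym svec = "nat \<Rightarrow> complex"

definition smat_mult :: "smat \<Rightarrow> smat \<Rightarrow> smat" where
  "smat_mult A B = (\<lambda>i j. infsum (\<lambda>k. A i k * B k j) {1..})"

definition smat_vec :: "smat \<Rightarrow> svec \<Rightarrow> svec" where
  "smat_vec A x = (\<lambda>i. infsum (\<lambda>k. A i k * x k) {1..})"

definition smat_id :: smat where
  "smat_id = (\<lambda>i j. if i = j then 1 else 0)"

primrec smat_pow :: "smat \<Rightarrow> nat \<Rightarrow> smat" where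
  "smat_pow A 0 = smat_id"
| "smat_pow A (Suc n) = smat_mult A (smat_pow A n)"

definition smat_diff :: "smat \<Rightarrow> smat \<Rightarrow> smat" where
  "smat_diff A B = (\<lambda>i j. A i j - B i j)"

definition e1 :: svec where
  "e1 = (\<lambda>i. if i = 1 then 1 else 0)"

definition toeplitz :: "complex fls \<Rightarrow> smat" where
  "toeplitz a = (\<lambda>i j. fls_nth a (int j - int i))"

definition zsym :: "complex fls" where
  "zsym = fls_X + fls_X_inv"

definition A_alpha :: "complex \<Rightarrow> smat" where
  "A_alpha \<alpha> = (\<lambda>i j. toeplitz zsym i j + \<alpha> * e1 i * e1 j)"

definition K_mat :: "complex \<Rightarrow> nat \<Rightarrow> smat" where
  "K_mat \<alpha> n = smat_diff (smat_pow (A_alpha \<alpha>) n) (toeplitz (zsym ^ n))"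

definition is_hankel :: "smat \<Rightarrow> bool" where
  "is_hankel M \<longleftrightarrow> (\<forall>i j i' j'. 1 \<le> i \<and> 1 \<le> j \<and> 1 \<le> i' \<and> 1 \<le> j' \<and> i + j = i' + j'
      \<longrightarrow> M i j = M i' j')"

definition sigma_coef :: "complex \<Rightarrow> nat \<Rightarrow> complex" where
  "sigma_coef \<alpha> n = (if even n then \<alpha> * of_nat (n choose (n div 2))
                 else - of_nat (n choose (n div 2)))"

end

theory Submission
  imports Defs
begin

text \<open>Let c_n(m) be the coefficient of z^m in (z + 1/z)^n, so that
  K_n(i,j) = A^n(i,j) - c_n(j-i). Away from its first row A acts like T(z + 1/z), and
  c_{n+1}(m) = c_n(m-1) + c_n(m+1); hence K_{n+1}(i,j) = K_n(i-1,j) + K_n(i+1,j) for i \<ge> 2,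
  which propagates the Hankel relation K(i,j) = K(i+1,j-1). In the first row the perturbation
  \<alpha> and a boundary term c_n(j) appear, and the Hankel relation survives there because of a
  second invariant, K_n(1,j) - \<alpha> K_n(1,j+1) = \<alpha> c_n(j) - c_n(j+1), proved simultaneously
  by induction on n. The column recursion is the case j = 1 of the same recurrences, with
  \<sigma>_n = \<alpha> c_n(0) - c_n(1) evaluated by the binomial theorem.\<close>

declare One_nat_def [simp del]

lemma infsum_eq_sum_if_support_subset:
  fixes f :: "'a \<Rightarrow> 'b::{comm_monoid_add, t2_space}"
  assumes "finite F" "F \<subseteq> S" "\<And>x. x \<in> S - F \<Longrightarrow> f x = 0"
  shows "infsum f S = sum f F"
proof -
  have "infsum f S = infsum f F" using assms by (intro infsum_cong_neutral) auto
  then show ?thesis using assms(1) by simp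
qed

lemma smat_vec_e1: "smat_vec M e1 = (\<lambda>i. M i 1)"
proof
  fix i
  have "smat_vec M e1 i = (\<Sum>k\<in>{1}. M i k * e1 k)"
    unfolding smat_vec_def by (rule infsum_eq_sum_if_support_subset) (auto simp: e1_def)
  then show "smat_vec M e1 i = M i 1" by (simp add: e1_def)
qed

lemma A_alpha_apply:
  "A_alpha \<alpha> i k = (if k = i + 1 \<or> i = k + 1 then 1 else 0) + (if i = 1 \<and> k = 1 then \<alpha> else 0)"
  unfolding A_alpha_def toeplitz_def zsym_def e1_def by auto

lemma smat_vec_A_alpha:
  assumes "i \<ge> 1"
  shows "smat_vec (A_alpha \<alpha>) x i = (if i = 1 then \<alpha> * x 1 else x (i - 1)) + x (i + 1)"
proof (cases "i = 1")
  case True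
  have "smat_vec (A_alpha \<alpha>) x i = (\<Sum>k\<in>{1, 2}. A_alpha \<alpha> i k * x k)"
    unfolding smat_vec_def by (rule infsum_eq_sum_if_support_subset) (auto simp: A_alpha_apply True)
  also have "\<dots> = \<alpha> * x 1 + x 2" by (simp add: A_alpha_apply True)
  finally show ?thesis using True by simp
next
  case False
  with assms have "i \<ge> 2" by simp
  then have "smat_vec (A_alpha \<alpha>) x i = (\<Sum>k\<in>{i - 1, i + 1}. A_alpha \<alpha> i k * x k)"
    unfolding smat_vec_def by (intro infsum_eq_sum_if_support_subset) (auto simp: A_alpha_apply)
  with \<open>i \<ge> 2\<close> show ?thesis by (simp add: A_alpha_apply)
qed

lemma smat_pow_A_alpha_Suc:
  assumes "i \<ge> 1"
  shows "smat_pow (A_alpha \<alpha>) (Suc n) i j =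
    (if i = 1 then \<alpha> * smat_pow (A_alpha \<alpha>) n 1 j else smat_pow (A_alpha \<alpha>) n (i - 1) j)
    + smat_pow (A_alpha \<alpha>) n (i + 1) j"
  using smat_vec_A_alpha[OF assms, of \<alpha> "\<lambda>k. smat_pow (A_alpha \<alpha>) n k j"]
  by (simp add: smat_mult_def smat_vec_def)

declare smat_pow.simps(2) [simp del]

abbreviation zsym_power_coeff :: "nat \<Rightarrow> int \<Rightarrow> complex" where
  "zsym_power_coeff n m \<equiv> fls_nth (zsym ^ n) m"

lemma zsym_power_coeff_Suc: "zsym_power_coeff (Suc n) m = zsym_power_coeff n (m - 1) + zsym_power_coeff n (m + 1)"
  by (simp add: zsym_def distrib_right fls_X_times_conv_shift fls_X_inv_times_conv_shift)

lemma zsym_power_coeff_eq_sum: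
  "zsym_power_coeff n m = (\<Sum>k\<le>n. if int (2*k) - int n = m then of_nat (n choose k) else 0)"
proof -
  have "zsym ^ n = (\<Sum>k\<le>n. of_nat (n choose k) * fls_X_intpow (int (2*k) - int n))"
    unfolding zsym_def binomial_ring fls_X_power_conv_shift_1 fls_X_inv_power_conv_shift_1
    by (intro sum.cong) (simp_all add: fls_shifted_times_simps algebra_simps)
  then show ?thesis by (auto simp: fls_nth_sum intro!: sum.cong)
qed

lemma zsym_power_coeff_eq_binomial:
  assumes "k0 \<le> n" "int (2*k0) - int n = m"
  shows "zsym_power_coeff n m = of_nat (n choose k0)"
proof -
  have "zsym_power_coeff n m = (\<Sum>k\<le>n. if k = k0 then of_nat (n choose k) else 0)"
    unfolding zsym_power_coeff_eq_sum using assms(2) by (intro sum.cong) auto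
  then show ?thesis using assms(1) by simp
qed

lemma zsym_power_coeff_eq_0_if_odd:
  assumes "odd (m + int n)"
  shows "zsym_power_coeff n m = 0"
proof -
  have "int (2*k) - int n \<noteq> m" for k
  proof
    assume "int (2*k) - int n = m"
    then have "m + int n = 2 * int k" by simp
    with assms show False by simp
  qed
  then show ?thesis unfolding zsym_power_coeff_eq_sum by simp
qed

lemma sigma_coef_eq: "sigma_coef \<alpha> n = \<alpha> * zsym_power_coeff n 0 - zsym_power_coeff n 1"
proof (cases "even n")
  case True
  then obtain q where n: "n = 2*q" by blast
  have "zsym_power_coeff n 0 = of_nat (n choose q)" by (rule zsym_power_coeff_eq_binomial) (simp_all add: n)
  moreover have "zsym_power_coeff n 1 = 0" by (rule zsym_power_coeff_eq_0_if_odd) (simp add: n)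
  ultimately show ?thesis using True by (simp add: sigma_coef_def n)
next
  case False
  then obtain q where n: "n = 2*q + 1" by (blast elim: oddE)
  have "zsym_power_coeff n 0 = 0" by (rule zsym_power_coeff_eq_0_if_odd) (simp add: n)
  moreover have "zsym_power_coeff n 1 = of_nat (n choose (q+1))" by (rule zsym_power_coeff_eq_binomial) (simp_all add: n)
  moreover have "n choose (q+1) = n choose (n div 2)" using binomial_symmetric[of q n] by (simp add: n)
  ultimately show ?thesis using False by (simp add: sigma_coef_def)
qed

definition shift_invariant :: "smat \<Rightarrow> bool" where
  "shift_invariant M \<longleftrightarrow> (\<forall>i\<ge>1. \<forall>j\<ge>2. M i j = M (i + 1) (j - 1))"

lemma shift_invariant_imp_is_hankel:
  assumes "shift_invariant M"
  shows "is_hankel M"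
proof -
  have shift: "M i (j + d) = M (i + d) j" if "i \<ge> 1" "j \<ge> 1" for i j d
    using that(1)
  proof (induction d arbitrary: i)
    case (Suc d)
    have "M i (j + Suc d) = M (i + 1) (j + d)"
      using assms Suc.prems that(2) unfolding shift_invariant_def by fastforce
    also have "\<dots> = M (i + Suc d) j" using Suc.IH[of "i + 1"] by (simp add: Suc_eq_plus1_left ac_simps)
    finally show ?case .
  qed simp
  show ?thesis
    unfolding is_hankel_def
  proof (intro allI impI)
    fix i j i' j' :: nat
    assume "1 \<le> i \<and> 1 \<le> j \<and> 1 \<le> i' \<and> 1 \<le> j' \<and> i + j = i' + j'"
    note hyps = this
    show "M i j = M i' j'"
    proof (cases "j' \<le> j")
      case True
      then show ?thesis using hyps shift[of i j' "j - j'"] by simp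
    next
      case False
      with hyps have "j' = j + (j' - j)" "i = i' + (j' - j)" by linarith+
      then show ?thesis using hyps shift[of i' j "j' - j"] by simp
    qed
  qed
qed

lemma K_mat_apply: "K_mat \<alpha> n i j = smat_pow (A_alpha \<alpha>) n i j - zsym_power_coeff n (int j - int i)"
  unfolding K_mat_def smat_diff_def toeplitz_def by simp

lemma K_mat_Suc_row:
  assumes "i \<ge> 2"
  shows "K_mat \<alpha> (Suc n) i j = K_mat \<alpha> n (i - 1) j + K_mat \<alpha> n (i + 1) j"
proof -
  have "int j - int (i - 1) = int j - int i + 1" using assms by simp
  moreover have "i \<ge> 1" "i \<noteq> 1" using assms by simp_all
  ultimately show ?thesis
    unfolding K_mat_apply zsym_power_coeff_Suc smat_pow_A_alpha_Suc[OF \<open>i \<ge> 1\<close>] by (simp add: algebra_simps)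
qed

lemma K_mat_Suc_row_1:
  "K_mat \<alpha> (Suc n) 1 j = K_mat \<alpha> n 2 j + \<alpha> * K_mat \<alpha> n 1 j
     + \<alpha> * zsym_power_coeff n (int j - 1) - zsym_power_coeff n (int j)"
  unfolding K_mat_apply zsym_power_coeff_Suc smat_pow_A_alpha_Suc[OF order_refl] by (simp add: algebra_simps)

definition first_row_relation :: "complex \<Rightarrow> nat \<Rightarrow> bool" where
  "first_row_relation \<alpha> n \<longleftrightarrow> (\<forall>j\<ge>1. K_mat \<alpha> n 1 j - \<alpha> * K_mat \<alpha> n 1 (j + 1)
                              = \<alpha> * zsym_power_coeff n (int j) - zsym_power_coeff n (int j + 1))"

lemma first_row_relationD:
  assumes "first_row_relation \<alpha> n" "j \<ge> 1"
  shows "K_mat \<alpha> n 1 j - \<alpha> * K_mat \<alpha> n 1 (j + 1)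
           = \<alpha> * zsym_power_coeff n (int j) - zsym_power_coeff n (int j + 1)"
  using assms unfolding first_row_relation_def by blast

lemma shift_invariant_K_mat_Suc:
  assumes shift: "shift_invariant (K_mat \<alpha> n)"
    and first_row: "first_row_relation \<alpha> n"
  shows "shift_invariant (K_mat \<alpha> (Suc n))"
  unfolding shift_invariant_def
proof (intro allI impI)
  fix i j :: nat
  assume "i \<ge> 1" "j \<ge> 2"
  let ?K = "K_mat \<alpha> n"
  show "K_mat \<alpha> (Suc n) i j = K_mat \<alpha> (Suc n) (i + 1) (j - 1)"
  proof (cases "i = 1")
    case True
    have "?K 2 j = ?K 3 (j - 1)"
      using shift \<open>j \<ge> 2\<close> unfolding shift_invariant_def by (simp add: numeral_3_eq_3 numeral_2_eq_2)
    moreover have "?K 1 (j - 1) - \<alpha> * ?K 1 j = \<alpha> * zsym_power_coeff n (int j - 1) - zsym_power_coeff n (int j)"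
      using first_row_relationD[OF first_row, of "j - 1"] \<open>j \<ge> 2\<close> by (simp add: of_nat_diff)
    moreover have "K_mat \<alpha> (Suc n) 2 (j - 1) = ?K 1 (j - 1) + ?K 3 (j - 1)"
      using K_mat_Suc_row[of 2 \<alpha> n "j - 1"] by (simp add: One_nat_def)
    ultimately show ?thesis
      using True by (simp add: K_mat_Suc_row_1 algebra_simps)
  next
    case False
    with \<open>i \<ge> 1\<close> have "i \<ge> 2" by simp
    have "K_mat \<alpha> (Suc n) i j = ?K (i - 1) j + ?K (i + 1) j"
      using K_mat_Suc_row[OF \<open>i \<ge> 2\<close>] .
    also have "\<dots> = ?K i (j - 1) + ?K (i + 2) (j - 1)"
      using shift \<open>i \<ge> 2\<close> \<open>j \<ge> 2\<close> unfolding shift_invariant_def by (simp add: add.assoc)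
    also have "\<dots> = K_mat \<alpha> (Suc n) (i + 1) (j - 1)"
      using K_mat_Suc_row[of "i + 1" \<alpha> n "j - 1"] \<open>i \<ge> 2\<close> by (simp add: add.assoc)
    finally show ?thesis .
  qed
qed

lemma first_row_relation_Suc:
  assumes shift: "shift_invariant (K_mat \<alpha> n)"
    and first_row: "first_row_relation \<alpha> n"
  shows "first_row_relation \<alpha> (Suc n)"
  unfolding first_row_relation_def
proof (intro allI impI)
  fix j :: nat
  assume "j \<ge> 1"
  let ?K = "K_mat \<alpha> n"
  have shift_2j: "?K 2 j = ?K 1 (j + 1)" "?K 2 (j + 1) = ?K 1 (j + 1 + 1)"
    using shift \<open>j \<ge> 1\<close> unfolding shift_invariant_def by (simp_all add: add.assoc)
  have row_j: "?K 1 j = \<alpha> * ?K 1 (j + 1) + \<alpha> * zsym_power_coeff n (int j) - zsym_power_coeff n (int j + 1)"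
    using first_row_relationD[OF first_row \<open>j \<ge> 1\<close>] by (simp add: algebra_simps)
  have row_Suc_j: "?K 1 (j + 1)
      = \<alpha> * ?K 1 (j + 1 + 1) + \<alpha> * zsym_power_coeff n (int j + 1) - zsym_power_coeff n (int j + 1 + 1)"
    using first_row_relationD[OF first_row, of "j + 1"] by (simp add: algebra_simps)
  show "K_mat \<alpha> (Suc n) 1 j - \<alpha> * K_mat \<alpha> (Suc n) 1 (j + 1)
      = \<alpha> * zsym_power_coeff (Suc n) (int j) - zsym_power_coeff (Suc n) (int j + 1)"
    unfolding K_mat_Suc_row_1 zsym_power_coeff_Suc shift_2j row_j row_Suc_j by (simp add: algebra_simps)
qed

lemma K_mat_invariants: "shift_invariant (K_mat \<alpha> n) \<and> first_row_relation \<alpha> n"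
proof (induction n)
  case 0
  show ?case by (simp add: shift_invariant_def first_row_relation_def K_mat_apply smat_id_def)
next
  case (Suc n)
  then show ?case using shift_invariant_K_mat_Suc first_row_relation_Suc by blast
qed

lemma K_mat_Suc_first_column:
  assumes "i \<ge> 1"
  shows "smat_vec (K_mat \<alpha> (Suc n)) e1 i
           = smat_vec (A_alpha \<alpha>) (smat_vec (K_mat \<alpha> n) e1) i + sigma_coef \<alpha> n * e1 i"
proof (cases "i = 1")
  case True
  then show ?thesis
    unfolding smat_vec_e1 by (simp add: smat_vec_A_alpha K_mat_Suc_row_1 sigma_coef_eq e1_def algebra_simps)
next
  case False
  with assms have "i \<ge> 2" by simp
  then show ?thesis unfolding smat_vec_e1 by (simp add: smat_vec_A_alpha K_mat_Suc_row e1_def)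
qed

theorem lemma1:
  fixes \<alpha> :: complex and n :: nat
  assumes "n \<ge> 1"  \<comment> \<open>not needed: both claims also hold for \<open>n = 0\<close>\<close>
  shows "is_hankel (K_mat \<alpha> n) \<and>
         (\<forall>i\<ge>1. smat_vec (K_mat \<alpha> (Suc n)) e1 i
                  = smat_vec (A_alpha \<alpha>) (smat_vec (K_mat \<alpha> n) e1) i + sigma_coef \<alpha> n * e1 i)"
  using K_mat_invariants shift_invariant_imp_is_hankel K_mat_Suc_first_column
  by blast

end
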